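(* Let $k>0$, $\mu>0$ and define, for a second-rank tensor $\mathbf A$ on $\mathbb{R}^3$ with $\det\mathbf A>0$, $$\rho_{\mathrm R}\psi_{\mathrm{el}}(\mathbf A):=\frac{k}{2}\Big(\ln\sqrt{\det\mathbf A}\Big)^2+\frac{\mu}{2}\Big(\operatorname{tr}\big((\det\mathbf A)^{-1/3}\mathbf A\big)-3\Big).$$ Let $M$ be the set of symmetric positive definite second-rank tensors $\mathbf B$ on $\mathbb{R}^3$ with $\det\mathbf B=1$, and for $\mathbf C^{(1)},\mathbf C^{(2)}\in M$ define $\mathrm{Dist}(\mathbf C^{(1)},\mathbf C^{(2)}):=\sqrt{\rho_{\mathrm R}\psi_{\mathrm{el}}\big(\mathbf C^{(1)}(\mathbf C^{(2)})^{-1}\big)}$. Then: (i) for every second-rank tensor $\mathbf F_0$ with $\det\mathbf F_0=1$ and all $\mathbf C^{(1)},\mathbf C^{(2)}\in M$, $\mathrm{Dist}\big(\mathbf F_0^{-\mathrm T}\mathbf C^{(1)}\mathbf F_0^{-1},\mathbf F_0^{-\mathrm T}\mathbf C^{(2)}\mathbf F_0^{-1}\big)=\mathrm{Dist}(\mathbf C^{(1)},\mathbf C^{(2)})$; (ii) for all $\mathbf C^{(1)},\mathbf C^{(2)}\in M$ one has $\mathrm{Dist}(\mathbf C^{(1)},\mathbf C^{(2)})\ge 0$, and $\mathrm{Dist}(\mathbf C^{(1)},\mathbf C^{(2)})=0$ if and only if $\mathbf C^{(1)}=\mathbf C^{(2)}$.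
   Context: $\mathbf A^{-\mathrm T}$ denotes the inverse of the transpose. $\rho_{\mathrm R}\psi_{\mathrm{el}}$ is the (generalized Neo-Hooke) free energy density written as a single function; $\rho_{\mathrm R}>0$ is a constant mass density. *)

theory Defs
  imports "HOL-Analysis.Analysis"
begin

definition psi_el :: "real \<Rightarrow> real \<Rightarrow> real^3^3 \<Rightarrow> real" where
  "psi_el k \<mu> A = k / 2 * (ln (sqrt (det A)))^2
      + \<mu> / 2 * (trace ((det A) powr (-1/3) *\<^sub>R A) - 3)"

definition M_set :: "(real^3^3) set" where
  "M_set = {B. transpose B = B \<and> (\<forall>x. x \<noteq> 0 \<longrightarrow> x \<bullet> (B *v x) > 0) \<and> det B = 1}"

definition Dist :: "real \<Rightarrow> real \<Rightarrow> real^3^3 \<Rightarrow> real^3^3 \<Rightarrow> real" where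
  "Dist k \<mu> C1 C2 = sqrt (psi_el k \<mu> (C1 ** matrix_inv C2))"

end

theory Submission
  imports Defs
begin

text \<open>
  The energy depends on its argument only through determinant and trace, and the congruence
  \<open>C \<mapsto> F0\<^sup>-\<^sup>T C F0\<^sup>-\<^sup>1\<close> replaces \<open>C1 C2\<^sup>-\<^sup>1\<close> by a similar tensor; this gives the invariance.

  For unimodular arguments the volumetric term vanishes and \<open>Dist\<^sup>2 = \<mu>/2 (tr (C1 C2\<^sup>-\<^sup>1) - 3)\<close>.
  Write \<open>C2 = L D L\<^sup>T\<close> with \<open>L\<close> unit lower triangular and \<open>D = diag d\<close>. Then
  \<open>tr (C1 C2\<^sup>-\<^sup>1) = \<Sum>\<^sub>i A\<^sub>i\<^sub>i / d\<^sub>i\<close> for the unimodular positive definite \<open>A = L\<^sup>-\<^sup>1 C1 L\<^sup>-\<^sup>T\<close>.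
  Hadamard's inequality gives \<open>\<Prod>\<^sub>i A\<^sub>i\<^sub>i \<ge> det A = 1 = \<Prod>\<^sub>i d\<^sub>i\<close>, so by AM-GM the trace is at least 3,
  with equality only if \<open>A = D\<close>, i.e. \<open>C1 = C2\<close>.
\<close>

lemma matrix_inv_right:
  fixes A :: "'a::field^'n^'n"
  assumes "invertible A"
  shows "A ** matrix_inv A = mat 1"
  using someI_ex[OF assms[unfolded invertible_def]] by (simp add: matrix_inv_def)

lemma matrix_inv_left:
  fixes A :: "'a::field^'n^'n"
  assumes "invertible A"
  shows "matrix_inv A ** A = mat 1"
  using matrix_inv_right[OF assms] matrix_left_right_inverse by blast

lemma matrix_inv_unique:
  fixes A X :: "'a::field^'n^'n"
  assumes "A ** X = mat 1"
  shows "matrix_inv A = X"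
proof -
  have "invertible A"
    using assms invertible_right_inverse by blast
  then have "matrix_inv A = matrix_inv A ** (A ** X)"
    using assms by simp
  also have "\<dots> = X"
    using matrix_inv_left[OF \<open>invertible A\<close>] by (simp add: matrix_mul_assoc)
  finally show ?thesis .
qed

lemma invertible_matrix_inv:
  fixes A :: "'a::field^'n^'n"
  assumes "invertible A"
  shows "invertible (matrix_inv A)"
  using matrix_inv_left[OF assms] invertible_right_inverse by blast

lemma matrix_inv_mult:
  fixes A B :: "'a::field^'n^'n"
  assumes "invertible A" "invertible B"
  shows "matrix_inv (A ** B) = matrix_inv B ** matrix_inv A"
proof (rule matrix_inv_unique)
  have "A ** B ** (matrix_inv B ** matrix_inv A) = A ** (B ** matrix_inv B) ** matrix_inv A"
    by (simp add: matrix_mul_assoc)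
  then show "A ** B ** (matrix_inv B ** matrix_inv A) = mat 1"
    using assms by (simp add: matrix_inv_right)
qed

lemma matrix_inv_transpose:
  fixes A :: "'a::field^'n^'n"
  assumes "invertible A"
  shows "matrix_inv (transpose A) = transpose (matrix_inv A)"
  by (metis matrix_inv_left[OF assms] matrix_inv_unique matrix_transpose_mul transpose_mat)

lemma det_matrix_inv:
  fixes A :: "'a::field^'n^'n"
  assumes "invertible A"
  shows "det (matrix_inv A) = inverse (det A)"
  using det_mul[of A "matrix_inv A"] matrix_inv_right[OF assms] assms
  by (simp add: invertible_det_nz field_simps)

lemma trace_similar:
  fixes G Q :: "'a::field^'n^'n"
  assumes "invertible G"
  shows "trace (G ** Q ** matrix_inv G) = trace Q"
  using trace_mul_sym[of "G ** Q" "matrix_inv G"] matrix_inv_left[OF assms]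
  by (simp add: matrix_mul_assoc)

lemma det_similar:
  fixes G Q :: "'a::field^'n^'n"
  assumes "invertible G"
  shows "det (G ** Q ** matrix_inv G) = det Q"
  using assms by (simp add: det_mul det_matrix_inv invertible_det_nz)

lemma trace_scaleR: "trace (c *\<^sub>R (A::real^'n^'n)) = c * trace A"
  by (simp add: trace_def sum_distrib_left)

lemma psi_el_similar:
  assumes "invertible G"
  shows "psi_el k \<mu> (G ** Q ** matrix_inv G) = psi_el k \<mu> Q"
  using assms by (simp add: psi_el_def trace_scaleR det_similar trace_similar)

lemma psi_el_det_1:
  assumes "det A = 1"
  shows "psi_el k \<mu> A = \<mu> / 2 * (trace A - 3)"
  using assms by (simp add: psi_el_def trace_scaleR)

lemma Dist_mult_invariant:
  assumes "invertible G" "invertible H" "invertible C2"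
  shows "Dist k \<mu> (G ** C1 ** H) (G ** C2 ** H) = Dist k \<mu> C1 C2"
proof -
  have "matrix_inv (G ** C2 ** H) = matrix_inv H ** matrix_inv C2 ** matrix_inv G"
    using assms by (simp add: matrix_inv_mult invertible_mult matrix_mul_assoc)
  then have "G ** C1 ** H ** matrix_inv (G ** C2 ** H)
      = G ** C1 ** (H ** matrix_inv H) ** matrix_inv C2 ** matrix_inv G"
    by (simp add: matrix_mul_assoc)
  also have "\<dots> = G ** (C1 ** matrix_inv C2) ** matrix_inv G"
    using assms(2) by (simp add: matrix_inv_right matrix_mul_assoc)
  finally show ?thesis
    using assms(1) by (simp add: Dist_def psi_el_similar)
qed

definition pos_def :: "real^'n^'n \<Rightarrow> bool" where
  "pos_def A \<longleftrightarrow> (\<forall>x. x \<noteq> 0 \<longrightarrow> 0 < x \<bullet> (A *v x))"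

lemma M_set_iff: "B \<in> M_set \<longleftrightarrow> transpose B = B \<and> pos_def B \<and> det B = 1"
  by (simp add: M_set_def pos_def_def)

lemma pos_def_congruence:
  fixes A P :: "real^'n^'n"
  assumes "pos_def A" "invertible P"
  shows "pos_def (P ** A ** transpose P)"
  unfolding pos_def_def
proof (intro allI impI)
  fix x :: "real^'n"
  assume "x \<noteq> 0"
  then have "transpose P *v x \<noteq> 0"
    using inj_matrix_vector_mult[OF transpose_invertible[OF assms(2)]]
    by (metis injD matrix_vector_mult_0_right)
  then have "0 < (transpose P *v x) \<bullet> (A *v (transpose P *v x))"
    using assms(1) by (simp add: pos_def_def)
  also have "(transpose P *v x) \<bullet> (A *v (transpose P *v x)) = x \<bullet> ((P ** A ** transpose P) *v x)"
    by (metis dot_lmul_matrix matrix_vector_mul_assoc transpose_transpose vector_transpose_matrix)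
  finally show "0 < x \<bullet> ((P ** A ** transpose P) *v x)" .
qed

lemma M_set_congruence:
  assumes "A \<in> M_set" "det P = 1"
  shows "P ** A ** transpose P \<in> M_set"
  using assms pos_def_congruence[of A P]
  by (simp add: M_set_iff invertible_det_nz det_mul matrix_transpose_mul matrix_mul_assoc)

definition diag_mat :: "real^'n \<Rightarrow> real^'n^'n" where
  "diag_mat d = (\<chi> i j. if i = j then d$i else 0)"

lemma trace_mult_diag_mat: "trace (A ** diag_mat d) = (\<Sum>i\<in>UNIV. A$i$i * d$i)"
  by (simp add: trace_def matrix_matrix_mult_def diag_mat_def if_distrib cong: if_cong)

lemma det_diag_mat: "det (diag_mat d) = (\<Prod>i\<in>UNIV. d$i)"
  by (simp add: det_diagonal diag_mat_def)

lemma diag_mat_mult: "diag_mat d ** diag_mat e = diag_mat (\<chi> i. d$i * e$i)"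
proof -
  have "(\<Sum>k\<in>UNIV. (if i = k then d$i else 0) * (if k = j then e$k else 0))
      = (\<Sum>k\<in>UNIV. if k = i then (if i = j then d$i * e$i else 0) else 0)" for i j
    by (intro sum.cong) auto
  then show ?thesis
    by (simp add: vec_eq_iff matrix_matrix_mult_def diag_mat_def)
qed

lemma matrix_inv_diag_mat:
  assumes "\<And>i. d$i \<noteq> 0"
  shows "matrix_inv (diag_mat d) = diag_mat (\<chi> i. inverse (d$i))"
  by (rule matrix_inv_unique) (simp add: assms diag_mat_mult, simp add: vec_eq_iff diag_mat_def mat_def)

definition lower3 :: "real \<Rightarrow> real \<Rightarrow> real \<Rightarrow> real^3^3" where
  "lower3 a b c = vector [vector [1, 0, 0], vector [a, 1, 0], vector [b, c, 1]]"

lemma det_lower3: "det (lower3 a b c) = 1"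
  by (simp add: det_3 lower3_def)

lemma lower3_diag_mat_congruence:
  "lower3 a b c ** diag_mat d ** transpose (lower3 a b c) =
    vector [vector [d$1, a * d$1, b * d$1],
            vector [a * d$1, a\<^sup>2 * d$1 + d$2, a * b * d$1 + c * d$2],
            vector [b * d$1, a * b * d$1 + c * d$2, b\<^sup>2 * d$1 + c\<^sup>2 * d$2 + d$3]]"
  by (simp add: vec_eq_iff forall_3 sum_3 matrix_matrix_mult_def transpose_def lower3_def
      diag_mat_def power2_eq_square algebra_simps)

lemma pos_def_diag_pos:
  assumes "pos_def A"
  shows "0 < A$i$i"
proof -
  have "0 < axis i 1 \<bullet> (A *v axis i 1)"
    using assms by (simp add: pos_def_def)
  then show ?thesis
    by (simp add: inner_axis' matrix_vector_mult_basis column_def)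
qed

lemma ldl3_exists:
  fixes X :: "real^3^3"
  assumes sym: "transpose X = X" and pd: "pos_def X"
  obtains a b c and d :: "real^3"
  where "\<And>i. 0 < d$i" "X = lower3 a b c ** diag_mat d ** transpose (lower3 a b c)"
proof -
  have "X$j$i = X$i$j" for i j
    using sym unfolding vec_eq_iff transpose_def by simp
  then have X_sym: "X$2$1 = X$1$2" "X$3$1 = X$1$3" "X$3$2 = X$2$3"
    by blast+
  have X11: "0 < X$1$1"
    using pos_def_diag_pos[OF pd] .
  \<comment> \<open>this test vector probes the leading \<open>2\<times>2\<close> minor\<close>
  have "vector [- X$1$2, X$1$1, 0] \<noteq> (0::real^3)"
    using X11 by (metis less_irrefl vector_3(2) zero_index)
  then have "0 < vector [- X$1$2, X$1$1, 0] \<bullet> (X *v vector [- X$1$2, X$1$1, 0])"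
    using pd by (simp add: pos_def_def)
  then have "0 < X$1$1 * (X$1$1 * X$2$2 - (X$1$2)\<^sup>2)"
    by (simp add: inner_vec_def matrix_vector_mult_def sum_3 X_sym power2_eq_square algebra_simps)
  then have minor: "0 < X$1$1 * X$2$2 - (X$1$2)\<^sup>2"
    using X11 by (simp add: zero_less_mult_iff)
  define a where "a = X$1$2 / X$1$1"
  define b where "b = X$1$3 / X$1$1"
  define d2 where "d2 = X$2$2 - (X$1$2)\<^sup>2 / X$1$1"
  define c where "c = (X$2$3 - a * b * X$1$1) / d2"
  define d :: "real^3" where "d = vector [X$1$1, d2, X$3$3 - b\<^sup>2 * X$1$1 - c\<^sup>2 * d2]"
  define L where "L = lower3 a b c"
  have "d2 \<noteq> 0"
    using minor X11 by (simp add: d2_def field_simps)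
  then have X_eq: "X = L ** diag_mat d ** transpose L"
    using X11 unfolding L_def lower3_diag_mat_congruence
    by (simp add: vec_eq_iff forall_3 X_sym a_def b_def c_def d_def d2_def field_simps power2_eq_square)
  have "invertible L"
    by (simp add: L_def invertible_det_nz det_lower3)
  then have PL: "matrix_inv L ** L = mat 1" "transpose L ** transpose (matrix_inv L) = mat 1"
    by (metis matrix_inv_left matrix_transpose_mul transpose_mat)+
  have "matrix_inv L ** X ** transpose (matrix_inv L)
      = (matrix_inv L ** L) ** diag_mat d ** (transpose L ** transpose (matrix_inv L))"
    unfolding X_eq by (simp add: matrix_mul_assoc)
  then have "pos_def (diag_mat d)"
    using pos_def_congruence[OF pd invertible_matrix_inv[OF \<open>invertible L\<close>]] PL by simp
  then have "0 < d$i" for i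
    using pos_def_diag_pos[of "diag_mat d" i] by (simp add: diag_mat_def)
  then show thesis
    using that X_eq L_def by blast
qed

lemma prod_3: "prod f (UNIV::3 set) = f 1 * f 2 * f 3"
  unfolding UNIV_3 by (simp add: ac_simps)

lemma hadamard_inequality3:
  fixes X :: "real^3^3"
  assumes "transpose X = X" "pos_def X"
  shows "det X \<le> (\<Prod>i\<in>UNIV. X$i$i)"
    and "det X = (\<Prod>i\<in>UNIV. X$i$i) \<Longrightarrow> X = diag_mat (\<chi> i. X$i$i)"
proof -
  obtain a b c and d :: "real^3"
    where d_pos: "\<And>i. 0 < d$i" and X_eq: "X = lower3 a b c ** diag_mat d ** transpose (lower3 a b c)"
    using ldl3_exists[OF assms] by metis
  define p where "p = a\<^sup>2 * d$1"
  define q where "q = b\<^sup>2 * d$1 + c\<^sup>2 * d$2"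
  have pq: "0 \<le> p" "0 \<le> q"
    using d_pos[of 1] d_pos[of 2] by (simp_all add: p_def q_def add_nonneg_nonneg)
  have diag: "X$1$1 = d$1" "X$2$2 = p + d$2" "X$3$3 = q + d$3"
    unfolding X_eq lower3_diag_mat_congruence by (simp_all add: p_def q_def)
  have "det X = d$1 * d$2 * d$3"
    unfolding X_eq det_mul det_transpose det_lower3 det_diag_mat prod_3 by simp
  moreover have "(\<Prod>i\<in>UNIV. X$i$i) = d$1 * (p + d$2) * (q + d$3)"
    by (simp add: prod_3 diag)
  ultimately have gap: "(\<Prod>i\<in>UNIV. X$i$i) - det X = d$1 * (p * q + p * d$3 + q * d$2)"
    by (simp add: algebra_simps)
  have "0 \<le> p * q + p * d$3 + q * d$2"
    using pq d_pos[of 2] d_pos[of 3] by simp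
  then have "0 \<le> d$1 * (p * q + p * d$3 + q * d$2)"
    using d_pos[of 1] by simp
  then show "det X \<le> (\<Prod>i\<in>UNIV. X$i$i)"
    using gap by linarith
  assume "det X = (\<Prod>i\<in>UNIV. X$i$i)"
  then have "p * q + p * d$3 + q * d$2 = 0"
    using gap d_pos[of 1] by simp
  then have "p * d$3 = 0" "q * d$2 = 0"
    using pq d_pos[of 2] d_pos[of 3] by (smt (verit) mult_nonneg_nonneg)+
  then have "p = 0" "q = 0"
    using d_pos[of 2] d_pos[of 3] by auto
  then have "a = 0" "b = 0" "c = 0"
    using d_pos[of 1] d_pos[of 2] by (auto simp: p_def q_def add_nonneg_eq_0_iff)
  then show "X = diag_mat (\<chi> i. X$i$i)"
    unfolding X_eq lower3_diag_mat_congruence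
    by (simp add: vec_eq_iff forall_3 diag_mat_def)
qed

lemma card_le_sum_if_prod_ge_1:
  fixes x :: "'a \<Rightarrow> real"
  assumes fin: "finite I" and pos: "\<And>i. i \<in> I \<Longrightarrow> 0 < x i" and prod: "1 \<le> (\<Prod>i\<in>I. x i)"
  shows "real (card I) \<le> (\<Sum>i\<in>I. x i)"
    and "(\<Sum>i\<in>I. x i) = real (card I) \<Longrightarrow> i \<in> I \<Longrightarrow> x i = 1"
proof -
  define g where "g i = x i - 1 - ln (x i)" for i
  have g_nonneg: "0 \<le> g i" if "i \<in> I" for i
    using ln_le_minus_one[OF pos[OF that]] by (simp add: g_def)
  have "0 \<le> ln (\<Prod>i\<in>I. x i)"
    using prod by simp
  also have "\<dots> = (\<Sum>i\<in>I. ln (x i))"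
    by (rule ln_prod[OF fin]) (use pos in force)
  finally have g_sum: "(\<Sum>i\<in>I. g i) \<le> (\<Sum>i\<in>I. x i) - card I"
    by (simp add: g_def sum_subtractf)
  moreover have "0 \<le> (\<Sum>i\<in>I. g i)"
    using g_nonneg by (simp add: sum_nonneg)
  ultimately show "real (card I) \<le> (\<Sum>i\<in>I. x i)"
    by linarith
  assume "(\<Sum>i\<in>I. x i) = real (card I)" "i \<in> I"
  then have "(\<Sum>i\<in>I. g i) = 0"
    using g_sum \<open>0 \<le> (\<Sum>i\<in>I. g i)\<close> by linarith
  then have "ln (x i) = x i - 1"
    using sum_nonneg_eq_0_iff[OF fin g_nonneg] \<open>i \<in> I\<close> by (simp add: g_def)
  then show "x i = 1"
    using ln_eq_minus_one pos \<open>i \<in> I\<close> by blast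
qed

lemma trace_mult_matrix_inv_congruence:
  fixes A L D :: "real^'n^'n"
  assumes L: "invertible L" and D: "invertible D"
  shows "trace (A ** matrix_inv (L ** D ** transpose L))
    = trace (matrix_inv L ** A ** transpose (matrix_inv L) ** matrix_inv D)"
proof -
  let ?P = "matrix_inv L"
  have "matrix_inv (L ** D ** transpose L) = matrix_inv (transpose L) ** matrix_inv (L ** D)"
    using L D by (simp add: matrix_inv_mult invertible_mult transpose_invertible)
  also have "\<dots> = transpose ?P ** matrix_inv D ** ?P"
    using L D by (simp add: matrix_inv_mult matrix_inv_transpose matrix_mul_assoc)
  finally have "trace (A ** matrix_inv (L ** D ** transpose L))
      = trace ((A ** transpose ?P ** matrix_inv D) ** ?P)"
    by (simp add: matrix_mul_assoc)
  also have "\<dots> = trace (?P ** A ** transpose ?P ** matrix_inv D)"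
    unfolding trace_mul_sym[of _ ?P] by (simp add: matrix_mul_assoc)
  finally show ?thesis .
qed

lemma sum_diag_ratio_ge_3:
  assumes A: "A \<in> M_set" and d_pos: "\<And>i. 0 < d$i" and prod_d: "(\<Prod>i\<in>UNIV. d$i) = 1"
  shows "3 \<le> (\<Sum>i\<in>UNIV. A$i$i / d$i)"
    and "(\<Sum>i\<in>UNIV. A$i$i / d$i) = 3 \<Longrightarrow> A = diag_mat d"
proof -
  have A': "transpose A = A" "pos_def A" "det A = 1"
    using A by (simp_all add: M_set_iff)
  have "1 \<le> (\<Prod>i\<in>UNIV. A$i$i)"
    using hadamard_inequality3(1)[OF A'(1,2)] A'(3) by simp
  then have prod_ge: "1 \<le> (\<Prod>i\<in>UNIV. A$i$i / d$i)"
    using prod_d by (simp add: prod_dividef)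
  have ratio_pos: "0 < A$i$i / d$i" for i
    using d_pos[of i] pos_def_diag_pos[OF A'(2)] by simp
  note am_gm = card_le_sum_if_prod_ge_1[of UNIV "\<lambda>i. A$i$i / d$i",
      OF finite_class.finite_UNIV ratio_pos prod_ge]
  show "3 \<le> (\<Sum>i\<in>UNIV. A$i$i / d$i)"
    using am_gm(1) by simp
  assume "(\<Sum>i\<in>UNIV. A$i$i / d$i) = 3"
  then have "(\<Sum>i\<in>UNIV. A$i$i / d$i) = real CARD(3)"
    by simp
  then have "A$i$i / d$i = 1" for i
    using am_gm(2) by blast
  then have A_diag: "A$i$i = d$i" for i
    using d_pos[of i] by (simp add: divide_eq_1_iff)
  then have "A = diag_mat (\<chi> i. A$i$i)"
    using hadamard_inequality3(2)[OF A'(1,2)] A'(3) prod_d by simp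
  then show "A = diag_mat d"
    using A_diag by (simp add: vec_lambda_eta)
qed

lemma trace_mult_matrix_inv_ge_3:
  assumes A: "A \<in> M_set" and B: "B \<in> M_set"
  shows "3 \<le> trace (A ** matrix_inv B)"
    and "trace (A ** matrix_inv B) = 3 \<Longrightarrow> A = B"
proof -
  have "transpose B = B" "pos_def B"
    using B by (simp_all add: M_set_iff)
  then obtain a b c and d :: "real^3"
    where d_pos: "\<And>i. 0 < d$i" and B_eq: "B = lower3 a b c ** diag_mat d ** transpose (lower3 a b c)"
    using ldl3_exists by metis
  define L where "L = lower3 a b c"
  define P where "P = matrix_inv L"
  define A' where "A' = P ** A ** transpose P"
  have L: "invertible L" "det L = 1"
    by (simp_all add: L_def invertible_det_nz det_lower3)
  then have A': "A' \<in> M_set"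
    using A by (simp add: A'_def P_def M_set_congruence det_matrix_inv)
  have d_nz: "d$i \<noteq> 0" for i
    using d_pos[of i] by simp
  then have "invertible (diag_mat d)"
    by (simp add: invertible_det_nz det_diag_mat)
  then have trace_eq: "trace (A ** matrix_inv B) = (\<Sum>i\<in>UNIV. A'$i$i / d$i)"
    using L(1) d_nz unfolding B_eq L_def[symmetric]
    by (simp add: trace_mult_matrix_inv_congruence A'_def P_def matrix_inv_diag_mat
        trace_mult_diag_mat divide_inverse)
  have "(\<Prod>i\<in>UNIV. d$i) = det B"
    using L(2) by (simp add: B_eq L_def[symmetric] det_mul det_diag_mat)
  then have prod_d: "(\<Prod>i\<in>UNIV. d$i) = 1"
    using B by (simp add: M_set_iff)
  show "3 \<le> trace (A ** matrix_inv B)"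
    using sum_diag_ratio_ge_3(1)[OF A' d_pos prod_d] by (simp add: trace_eq)
  assume "trace (A ** matrix_inv B) = 3"
  then have "A' = diag_mat d"
    using sum_diag_ratio_ge_3(2)[OF A' d_pos prod_d] by (simp add: trace_eq)
  have "L ** P = mat 1"
    using L(1) by (simp add: P_def matrix_inv_right)
  then have "A = (L ** P) ** A ** transpose (L ** P)"
    by simp
  also have "\<dots> = L ** A' ** transpose L"
    by (simp add: A'_def matrix_transpose_mul matrix_mul_assoc)
  finally show "A = B"
    by (simp add: \<open>A' = diag_mat d\<close> B_eq L_def)
qed

lemma psi_el_M_set:
  assumes "C1 \<in> M_set" "C2 \<in> M_set"
  shows "psi_el k \<mu> (C1 ** matrix_inv C2) = \<mu> / 2 * (trace (C1 ** matrix_inv C2) - 3)"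
  using assms by (intro psi_el_det_1) (simp add: M_set_iff det_mul det_matrix_inv invertible_det_nz)

theorem mainTheorem2:
  fixes k \<mu> :: real
  assumes "k > 0" and "\<mu> > 0"
  shows "(\<forall>F0 :: real^3^3. \<forall>C1 \<in> M_set. \<forall>C2 \<in> M_set. det F0 = 1 \<longrightarrow>
            Dist k \<mu> (matrix_inv (transpose F0) ** C1 ** matrix_inv F0)
                     (matrix_inv (transpose F0) ** C2 ** matrix_inv F0)
            = Dist k \<mu> C1 C2)
      \<and> (\<forall>C1 \<in> M_set. \<forall>C2 \<in> M_set.
            Dist k \<mu> C1 C2 \<ge> 0 \<and> (Dist k \<mu> C1 C2 = 0 \<longleftrightarrow> C1 = C2))"
proof (intro conjI ballI allI impI)
  fix F0 :: "real^3^3" and C1 C2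
  assume "C2 \<in> M_set" "det F0 = 1"
  then have "invertible F0" "invertible C2"
    by (simp_all add: invertible_det_nz M_set_iff)
  then show "Dist k \<mu> (matrix_inv (transpose F0) ** C1 ** matrix_inv F0)
      (matrix_inv (transpose F0) ** C2 ** matrix_inv F0) = Dist k \<mu> C1 C2"
    by (simp add: Dist_mult_invariant invertible_matrix_inv transpose_invertible)
next
  \<comment> \<open>the volumetric term vanishes on unimodular tensors\<close>
  fix C1 C2
  assume C: "C1 \<in> M_set" "C2 \<in> M_set"
  then have Dist: "Dist k \<mu> C1 C2 = sqrt (\<mu> / 2 * (trace (C1 ** matrix_inv C2) - 3))"
    by (simp add: Dist_def psi_el_M_set)
  show "0 \<le> Dist k \<mu> C1 C2"
    using trace_mult_matrix_inv_ge_3(1)[OF C] \<open>\<mu> > 0\<close> by (simp add: Dist)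
  have "C2 ** matrix_inv C2 = mat 1"
    using C(2) by (simp add: matrix_inv_right invertible_det_nz M_set_iff)
  then show "Dist k \<mu> C1 C2 = 0 \<longleftrightarrow> C1 = C2"
    using trace_mult_matrix_inv_ge_3(2)[OF C] \<open>\<mu> > 0\<close> by (auto simp: Dist trace_I)
qed

end
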